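(* Let $L\ge2$, $m\in\mathbb{R}$, $d_0=d_L=1$, $d_1,\dots,d_{L-1}\ge1$, and consider $$\mathcal{L}(\mathbf{w}) = (m-\mathbf{w}_L\mathbf{W}_{L-1}\cdots\mathbf{W}_2\mathbf{w}_1)^2,$$ where $\mathbf{w}_L\in\mathbb{R}^{1\times d_{L-1}}$, $\mathbf{w}_1\in\mathbb{R}^{d_1\times 1}$, $\mathbf{W}_i\in\mathbb{R}^{d_i\times d_{i-1}}$ for $2\le i\le L-1$, and $\mathbf{w}\in\mathbb{R}^N$ is the vector of all parameters, $N=\sum_{i=1}^L d_id_{i-1}$. Let $\mathbf{w}^*=(\mathbf{W}_1^*,\dots,\mathbf{W}_L^* )$ be any global minimizer, i.e. $\prod_{j=1}^L\mathbf{W}_j^*=m$ (writing $\mathbf{W}_1=\mathbf{w}_1$, $\mathbf{W}_L=\mathbf{w}_L$). Then $$\lambda_{\max}(\nabla^2\mathcal{L}(\mathbf{w}^* )) = 2\sum_{i=1}^L \sigma_{\max}\Big(\prod_{j=i+1}^L\mathbf{W}_j^*\Big)^2\,\sigma_{\max}\Big(\prod_{j=1}^{i-1}\mathbf{W}_j^*\Big)^2.$$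
   Context: For matrices $\mathbf{W}_j\in\mathbb{R}^{d_j\times d_{j-1}}$, $\prod_{j=n}^m\mathbf{W}_j := \mathbf{W}_m\mathbf{W}_{m-1}\cdots\mathbf{W}_n$ if $n\le m$, and the identity matrix of the appropriate size if $n>m$. $\sigma_{\max}$ denotes the largest singular value (spectral norm). $\nabla^2\mathcal{L}(\mathbf{w}^* )$ is the $N\times N$ Hessian of $\mathcal{L}$ with respect to $\mathbf{w}$, and $\lambda_{\max}$ its largest eigenvalue. *)

theory Defs
  imports Complex_Main "Jordan_Normal_Form.Char_Poly"
begin

text \<open>Ordered matrix product: mprod W d n m = W m * W (m-1) * ... * W n if n \<le> m,
  and the identity matrix of size d m (= d (n-1)) if n > m (used only for n \<ge> 1).\<close>
fun mprod :: "(nat \<Rightarrow> real mat) \<Rightarrow> (nat \<Rightarrow> nat) \<Rightarrow> nat \<Rightarrow> nat \<Rightarrow> real mat" where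
  "mprod W d n 0 = (if n = 0 then W 0 else 1\<^sub>m (d 0))"
| "mprod W d n (Suc m) = (if n \<le> Suc m then W (Suc m) * mprod W d n m else 1\<^sub>m (d (Suc m)))"

text \<open>Number of parameters N = sum_{i=1}^L d_i d_{i-1}, and the offset of layer i in the
  flattened parameter vector.\<close>
definition offset :: "(nat \<Rightarrow> nat) \<Rightarrow> nat \<Rightarrow> nat" where
  "offset d i = (\<Sum>j\<in>{1..<i}. d j * d (j - 1))"

definition num_params :: "(nat \<Rightarrow> nat) \<Rightarrow> nat \<Rightarrow> nat" where
  "num_params d L = (\<Sum>j\<in>{1..L}. d j * d (j - 1))"

definition layer :: "(nat \<Rightarrow> nat) \<Rightarrow> real vec \<Rightarrow> nat \<Rightarrow> real mat" where
  "layer d w i = mat (d i) (d (i - 1)) (\<lambda>(r, c). w $ (offset d i + r * d (i - 1) + c))"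

definition loss :: "(nat \<Rightarrow> nat) \<Rightarrow> nat \<Rightarrow> real \<Rightarrow> real vec \<Rightarrow> real" where
  "loss d L m w = (m - (mprod (layer d w) d 1 L) $$ (0, 0))\<^sup>2"

definition rderiv :: "(real \<Rightarrow> real) \<Rightarrow> real \<Rightarrow> real" where
  "rderiv f x = (SOME D. (f has_real_derivative D) (at x))"

definition second_partial :: "nat \<Rightarrow> (real vec \<Rightarrow> real) \<Rightarrow> real vec \<Rightarrow> nat \<Rightarrow> nat \<Rightarrow> real" where
  "second_partial N f w a b =
     rderiv (\<lambda>t. rderiv (\<lambda>s. f (w + s \<cdot>\<^sub>v unit_vec N a + t \<cdot>\<^sub>v unit_vec N b)) 0) 0"

definition hessian :: "nat \<Rightarrow> (real vec \<Rightarrow> real) \<Rightarrow> real vec \<Rightarrow> real mat" where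
  "hessian N f w = mat N N (\<lambda>(a, b). second_partial N f w a b)"

definition lambda_max :: "real mat \<Rightarrow> real" where
  "lambda_max A = Max {k. eigenvalue A k}"

definition sigma_max :: "real mat \<Rightarrow> real" where
  "sigma_max A = sqrt (lambda_max (transpose_mat A * A))"

end

theory Submission
  imports Defs
begin

text \<open>Every parameter enters exactly one factor of the end-to-end product
  p(w) = W_L \<cdots> W_1, so p is affine in each coordinate separately and bilinear in any two of
  them. At a global minimizer the residual m - p vanishes, so the Hessian of (m - p)^2 collapses
  to the rank-one matrix 2 g g^T, where g is the gradient of p; its largest eigenvalue is
  2 |g|^2. The partial derivative of p in the entry (r, c) of W_i is the product of entry r of the
  row vector W_L \<cdots> W_(i+1) and entry c of the column vector W_(i-1) \<cdots> W_1, so the squared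
  gradient entries of layer i sum to the product of the squared norms of these two vectors,
  which are their largest singular values.\<close>

section \<open>Rank-one matrices and singular values of vectors\<close>

lemma scalar_prod_self_nonneg: "0 \<le> (u :: real vec) \<bullet> u"
  using conjugate_square_ge_0_vec[of u] by simp

lemma scalar_prod_self_pos: "(u :: real vec) \<in> carrier_vec n \<Longrightarrow> u \<noteq> 0\<^sub>v n \<Longrightarrow> 0 < u \<bullet> u"
  using conjugate_square_greater_0_vec[of u n] by simp

lemma outer_mat_mult_vec:
  fixes u v :: "real vec"
  assumes u: "u \<in> carrier_vec n" and v: "v \<in> carrier_vec n"
  shows "mat n n (\<lambda>(x, y). c * u $ x * u $ y) *\<^sub>v v = (c * (u \<bullet> v)) \<cdot>\<^sub>v u"
proof (rule eq_vecI)
  fix i assume "i < dim_vec ((c * (u \<bullet> v)) \<cdot>\<^sub>v u)"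
  then have i: "i < n" using u by simp
  have "(mat n n (\<lambda>(x, y). c * u $ x * u $ y) *\<^sub>v v) $ i = (\<Sum>j<n. c * u $ i * u $ j * v $ j)"
    using i u v by (simp add: scalar_prod_def lessThan_atLeast0)
  also have "\<dots> = c * (u \<bullet> v) * u $ i"
    using v by (simp add: scalar_prod_def lessThan_atLeast0 sum_distrib_left mult_ac)
  finally show "(mat n n (\<lambda>(x, y). c * u $ x * u $ y) *\<^sub>v v) $ i = ((c * (u \<bullet> v)) \<cdot>\<^sub>v u) $ i"
    using i u by simp
qed (use u in simp)

lemma lambda_max_outer_mat:
  fixes u :: "real vec"
  assumes u: "u \<in> carrier_vec n" and n: "0 < n" and c: "0 \<le> c"
  shows "lambda_max (mat n n (\<lambda>(x, y). c * u $ x * u $ y)) = c * (u \<bullet> u)"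
proof -
  let ?M = "mat n n (\<lambda>(x, y). c * u $ x * u $ y)"
  have spectrum: "{k. eigenvalue ?M k} \<subseteq> {0, c * (u \<bullet> u)}"
  proof
    fix k assume "k \<in> {k. eigenvalue ?M k}"
    then obtain v where v: "v \<in> carrier_vec n" "v \<noteq> 0\<^sub>v n" "?M *\<^sub>v v = k \<cdot>\<^sub>v v"
      by (auto simp: eigenvalue_def eigenvector_def)
    then have eq: "k \<cdot>\<^sub>v v = (c * (u \<bullet> v)) \<cdot>\<^sub>v u"
      using outer_mat_mult_vec[OF u v(1)] by simp
    show "k \<in> {0, c * (u \<bullet> u)}"
    proof (cases "u \<bullet> v = 0")
      case True
      then have "k * (v \<bullet> v) = 0"
        using arg_cong[OF eq, of "\<lambda>x. x \<bullet> v"] u v by simp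
      then show ?thesis using scalar_prod_self_pos[OF v(1,2)] by simp
    next
      case False
      have "k * (u \<bullet> v) = c * (u \<bullet> v) * (u \<bullet> u)"
        using arg_cong[OF eq, of "\<lambda>x. u \<bullet> x"] u v by (simp add: scalar_prod_smult_right)
      then show ?thesis using False by simp
    qed
  qed
  have "eigenvalue ?M (c * (u \<bullet> u))"
  proof (cases "u = 0\<^sub>v n")
    case True
    then have "eigenvector ?M (unit_vec n 0) (c * (u \<bullet> u))"
      using n by (auto simp: eigenvector_def outer_mat_mult_vec[OF u])
    then show ?thesis unfolding eigenvalue_def by blast
  next
    case False
    then have "eigenvector ?M u (c * (u \<bullet> u))"
      using u by (simp add: eigenvector_def outer_mat_mult_vec[OF u u])
    then show ?thesis unfolding eigenvalue_def by blast
  qed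
  moreover have "0 \<le> c * (u \<bullet> u)" using c scalar_prod_self_nonneg[of u] by simp
  ultimately show ?thesis unfolding lambda_max_def
    using spectrum by (intro Max_eqI) (auto intro: finite_subset)
qed

lemma sigma_max_row_sq:
  fixes A :: "real mat"
  assumes A: "A \<in> carrier_mat 1 n" and n: "0 < n"
  shows "(sigma_max A)\<^sup>2 = (\<Sum>x<n. (A $$ (0, x))\<^sup>2)"
proof -
  let ?u = "row A 0"
  have u: "?u \<in> carrier_vec n" using A by auto
  have "transpose_mat A * A = mat n n (\<lambda>(x, y). 1 * ?u $ x * ?u $ y)"
    by (rule eq_matI) (use A in \<open>auto simp: scalar_prod_def\<close>)
  then have "(sigma_max A)\<^sup>2 = ?u \<bullet> ?u"
    unfolding sigma_max_def using lambda_max_outer_mat[OF u n, of 1] scalar_prod_self_nonneg by simp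
  also have "\<dots> = (\<Sum>x<n. (A $$ (0, x))\<^sup>2)"
    using A by (auto simp: scalar_prod_def power2_eq_square lessThan_atLeast0)
  finally show ?thesis .
qed

lemma sigma_max_col_sq:
  fixes A :: "real mat"
  assumes A: "A \<in> carrier_mat n 1"
  shows "(sigma_max A)\<^sup>2 = (\<Sum>x<n. (A $$ (x, 0))\<^sup>2)"
proof -
  define S where "S = (\<Sum>x<n. (A $$ (x, 0))\<^sup>2)"
  have S: "0 \<le> S" unfolding S_def by (intro sum_nonneg) auto
  let ?u = "vec 1 (\<lambda>_. sqrt S)"
  have "transpose_mat A * A = mat 1 1 (\<lambda>(x, y). 1 * ?u $ x * ?u $ y)"
    by (rule eq_matI) (use A S in \<open>auto simp: scalar_prod_def S_def power2_eq_square lessThan_atLeast0\<close>)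
  then have "(sigma_max A)\<^sup>2 = ?u \<bullet> ?u"
    unfolding sigma_max_def using lambda_max_outer_mat[of ?u 1 1] scalar_prod_self_nonneg by simp
  also have "\<dots> = S" using S by (simp add: scalar_prod_def)
  finally show ?thesis unfolding S_def .
qed

lemma sum_sq_outer_entries:
  fixes P Q :: "real mat"
  assumes P: "P \<in> carrier_mat 1 n" and n: "0 < n" and Q: "Q \<in> carrier_mat k 1"
  shows "(\<Sum>r<n. \<Sum>c<k. (P $$ (0, r) * Q $$ (c, 0))\<^sup>2) = (sigma_max P)\<^sup>2 * (sigma_max Q)\<^sup>2"
  by (simp add: sigma_max_row_sq[OF P n] sigma_max_col_sq[OF Q] power_mult_distrib sum_product)

section \<open>The Hessian of a squared residual\<close>

lemma rderiv_eqI: "(f has_real_derivative D) (at x) \<Longrightarrow> rderiv f x = D"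
  unfolding rderiv_def by (rule some_equality) (auto intro: DERIV_unique)

lemma second_partial_sq_residual:
  fixes p :: "real vec \<Rightarrow> real" and G :: "real vec \<Rightarrow> nat \<Rightarrow> real"
  assumes affine: "\<And>v a s. v \<in> carrier_vec N \<Longrightarrow> a < N \<Longrightarrow> p (v + s \<cdot>\<^sub>v unit_vec N a) = p v + s * G v a"
    and w: "w \<in> carrier_vec N" and fit: "p w = m" and a: "a < N" and b: "b < N"
  shows "second_partial N (\<lambda>v. (m - p v)\<^sup>2) w a b = 2 * G w a * G w b"
proof -
  define ea :: "real vec" where "ea = unit_vec N a"
  define eb :: "real vec" where "eb = unit_vec N b"
  define C where "C = G (w + ea) b - G w b"
  have bilinear: "p (w + s \<cdot>\<^sub>v ea + t \<cdot>\<^sub>v eb) = m + s * G w a + t * G w b + s * t * C" for s t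
  proof -
    have "w + s \<cdot>\<^sub>v ea + t \<cdot>\<^sub>v eb = (w + t \<cdot>\<^sub>v eb) + s \<cdot>\<^sub>v ea"
      using w unfolding ea_def eb_def by (intro eq_vecI) auto
    then have "p (w + s \<cdot>\<^sub>v ea + t \<cdot>\<^sub>v eb) = p (w + t \<cdot>\<^sub>v eb) + s * G (w + t \<cdot>\<^sub>v eb) a"
      using affine[of "w + t \<cdot>\<^sub>v eb" a s] w a unfolding ea_def eb_def by simp
    moreover have "G (w + t \<cdot>\<^sub>v eb) a = p (w + t \<cdot>\<^sub>v eb + ea) - p (w + t \<cdot>\<^sub>v eb)"
      using affine[of "w + t \<cdot>\<^sub>v eb" a 1] w a unfolding ea_def eb_def by simp
    moreover have "w + t \<cdot>\<^sub>v eb + ea = (w + ea) + t \<cdot>\<^sub>v eb"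
      using w unfolding ea_def eb_def by (intro eq_vecI) auto
    ultimately show ?thesis
      using affine[of "w + ea" b t] affine[of w b t] affine[of w a 1] w a b fit
      unfolding C_def ea_def eb_def by (simp add: algebra_simps)
  qed
  have inner: "rderiv (\<lambda>s. (m - p (w + s \<cdot>\<^sub>v ea + t \<cdot>\<^sub>v eb))\<^sup>2) 0
      = 2 * t * G w b * (G w a + t * C)" for t
    unfolding bilinear
    by (rule rderiv_eqI) (auto intro!: derivative_eq_intros simp: algebra_simps power2_eq_square)
  show ?thesis
    unfolding second_partial_def ea_def[symmetric] eb_def[symmetric] inner
    by (rule rderiv_eqI) (auto intro!: derivative_eq_intros simp: algebra_simps)
qed

lemma lambda_max_hessian_sq_residual:
  fixes p :: "real vec \<Rightarrow> real" and G :: "real vec \<Rightarrow> nat \<Rightarrow> real"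
  assumes affine: "\<And>v a s. v \<in> carrier_vec N \<Longrightarrow> a < N \<Longrightarrow> p (v + s \<cdot>\<^sub>v unit_vec N a) = p v + s * G v a"
    and w: "w \<in> carrier_vec N" and fit: "p w = m" and N: "0 < N"
  shows "lambda_max (hessian N (\<lambda>v. (m - p v)\<^sup>2) w) = 2 * (\<Sum>a<N. (G w a)\<^sup>2)"
proof -
  define g where "g = vec N (G w)"
  have g: "g \<in> carrier_vec N" unfolding g_def by simp
  have "hessian N (\<lambda>v. (m - p v)\<^sup>2) w = mat N N (\<lambda>(x, y). 2 * g $ x * g $ y)"
    unfolding hessian_def g_def
    by (rule eq_matI) (auto simp: second_partial_sq_residual[OF affine w fit])
  then show ?thesis
    using lambda_max_outer_mat[OF g N, of 2]
    by (simp add: g_def scalar_prod_def power2_eq_square lessThan_atLeast0)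
qed

section \<open>Products of layer matrices and the parameter layout\<close>

lemma mprod_carrier:
  assumes W: "\<And>j. 1 \<le> j \<Longrightarrow> j \<le> L \<Longrightarrow> W j \<in> carrier_mat (d j) (d (j - 1))"
  shows "1 \<le> n \<Longrightarrow> n \<le> Suc k \<Longrightarrow> k \<le> L \<Longrightarrow> mprod W d n k \<in> carrier_mat (d k) (d (n - 1))"
proof (induction k)
  case (Suc k)
  show ?case
  proof (cases "n \<le> Suc k")
    case True
    then show ?thesis using Suc W[of "Suc k"] by fastforce
  next
    case False
    then have "n = Suc (Suc k)" using Suc.prems by simp
    then show ?thesis by simp
  qed
qed auto

lemma mprod_empty: "mprod W d (Suc k) k = 1\<^sub>m (d k)"
  by (cases k) auto

lemma mprod_split:
  assumes W: "\<And>j. 1 \<le> j \<Longrightarrow> j \<le> L \<Longrightarrow> W j \<in> carrier_mat (d j) (d (j - 1))"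
  shows "1 \<le> n \<Longrightarrow> n \<le> Suc k \<Longrightarrow> k \<le> l \<Longrightarrow> l \<le> L \<Longrightarrow>
    mprod W d n l = mprod W d (Suc k) l * mprod W d n k"
proof (induction l)
  case (Suc l)
  have low: "mprod W d n k \<in> carrier_mat (d k) (d (n - 1))"
    using mprod_carrier[of L W d, OF W] Suc.prems by auto
  show ?case
  proof (cases "k = Suc l")
    case True
    then show ?thesis using low by (simp add: mprod_empty)
  next
    case False
    then have "k \<le> l" using Suc.prems by simp
    moreover have "mprod W d (Suc k) l \<in> carrier_mat (d l) (d k)"
      using mprod_carrier[of L W d, OF W, of "Suc k" l] Suc.prems \<open>k \<le> l\<close> by simp
    moreover have "W (Suc l) \<in> carrier_mat (d (Suc l)) (d l)"
      using W[of "Suc l"] Suc.prems by simp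
    ultimately show ?thesis
      using Suc low by (simp add: assoc_mult_mat[of _ "d (Suc l)" "d l"])
  qed
qed auto

lemma mprod_cong:
  "(\<And>j. n \<le> j \<Longrightarrow> j \<le> k \<Longrightarrow> W j = W' j) \<Longrightarrow> 1 \<le> n \<Longrightarrow> mprod W d n k = mprod W' d n k"
  by (induction k) auto

lemma mprod_entry_through_layer:
  assumes W: "\<And>j. 1 \<le> j \<Longrightarrow> j \<le> L \<Longrightarrow> W j \<in> carrier_mat (d j) (d (j - 1))"
    and d0: "d 0 = 1" and dL: "d L = 1" and i: "1 \<le> i" "i \<le> L"
  shows "mprod W d 1 L $$ (0, 0) = (\<Sum>r<d i. \<Sum>c<d (i - 1).
    mprod W d (Suc i) L $$ (0, r) * W i $$ (r, c) * mprod W d 1 (i - 1) $$ (c, 0))"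
proof -
  define P where "P = mprod W d (Suc i) L"
  define Q where "Q = mprod W d 1 (i - 1)"
  have P: "P \<in> carrier_mat 1 (d i)"
    unfolding P_def using mprod_carrier[of L W d, OF W, of "Suc i" L] i dL by auto
  have Q: "Q \<in> carrier_mat (d (i - 1)) 1"
    unfolding Q_def using mprod_carrier[of L W d, OF W, of 1 "i - 1"] i d0 by auto
  have Wi: "W i \<in> carrier_mat (d i) (d (i - 1))" using W i by simp
  have "mprod W d 1 L = P * mprod W d 1 i"
    unfolding P_def using mprod_split[of L W d, OF W, of 1 i L] i by simp
  also have "mprod W d 1 i = W i * Q"
    unfolding Q_def using i by (cases i) auto
  finally have "mprod W d 1 L $$ (0, 0) = (\<Sum>r<d i. P $$ (0, r) * (\<Sum>c<d (i - 1). W i $$ (r, c) * Q $$ (c, 0)))"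
    using P Q Wi by (simp add: scalar_prod_def lessThan_atLeast0)
  then show ?thesis
    unfolding P_def Q_def by (simp add: sum_distrib_left mult.assoc)
qed

lemma layer_carrier: "layer d w j \<in> carrier_mat (d j) (d (j - 1))"
  unfolding layer_def by simp

definition param_index :: "(nat \<Rightarrow> nat) \<Rightarrow> nat \<Rightarrow> nat \<Rightarrow> nat \<Rightarrow> nat" where
  "param_index d i r c = offset d i + r * d (i - 1) + c"

lemma layer_entry: "r < d j \<Longrightarrow> c < d (j - 1) \<Longrightarrow> layer d w j $$ (r, c) = w $ param_index d j r c"
  unfolding layer_def param_index_def by simp

lemma offset_Suc: "1 \<le> j \<Longrightarrow> offset d (Suc j) = offset d j + d j * d (j - 1)"
  unfolding offset_def by simp

lemma offset_mono: "j \<le> k \<Longrightarrow> offset d j \<le> offset d k"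
  unfolding offset_def by (rule sum_mono2) auto

lemma num_params_eq_offset: "num_params d L = offset d (Suc L)"
  unfolding num_params_def offset_def by (simp add: atLeastLessThanSuc_atLeastAtMost)

lemma param_index_bounds:
  assumes "1 \<le> i" "r < d i" "c < d (i - 1)"
  shows "offset d i \<le> param_index d i r c" "param_index d i r c < offset d (Suc i)"
proof -
  have "r * d (i - 1) + c < (r + 1) * d (i - 1)" using assms by simp
  also have "\<dots> \<le> d i * d (i - 1)" using assms by (intro mult_right_mono) auto
  finally show "param_index d i r c < offset d (Suc i)"
    using offset_Suc[OF assms(1), of d] unfolding param_index_def by simp
qed (simp add: param_index_def)

lemma param_index_lt_offset:
  "1 \<le> i \<Longrightarrow> i \<le> L \<Longrightarrow> r < d i \<Longrightarrow> c < d (i - 1) \<Longrightarrow> param_index d i r c < offset d (Suc L)"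
  using param_index_bounds(2)[of i r d c] offset_mono[of "Suc i" "Suc L" d] by simp

lemma param_index_inj:
  assumes "1 \<le> i" "r < d i" "c < d (i - 1)" "1 \<le> j" "r' < d j" "c' < d (j - 1)"
  shows "param_index d i r c = param_index d j r' c' \<longleftrightarrow> i = j \<and> r = r' \<and> c = c'"
proof
  assume eq: "param_index d i r c = param_index d j r' c'"
  have "\<not> i < j" and "\<not> j < i"
    using param_index_bounds[of i r d c] param_index_bounds[of j r' d c'] assms eq
      offset_mono[of "Suc i" j d] offset_mono[of "Suc j" i d] by auto
  then have ij: "i = j" by simp
  define D where "D = d (i - 1)"
  have "r * D + c = r' * D + c'"
    using eq ij unfolding param_index_def D_def by simp
  then have "(r * D + c) div D = (r' * D + c') div D" "(r * D + c) mod D = (r' * D + c') mod D"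
    by simp_all
  moreover have "c < D" "c' < D" using assms ij unfolding D_def by simp_all
  ultimately have "r = r' \<and> c = c'" by simp
  then show "i = j \<and> r = r' \<and> c = c'" using ij by simp
qed simp

lemma param_index_surj:
  "a < offset d (Suc L) \<Longrightarrow> \<exists>i r c. 1 \<le> i \<and> i \<le> L \<and> r < d i \<and> c < d (i - 1) \<and> a = param_index d i r c"
proof (induction L)
  case 0
  then show ?case by (simp add: offset_def)
next
  case (Suc L)
  show ?case
  proof (cases "a < offset d (Suc L)")
    case True
    then show ?thesis using Suc.IH le_SucI by blast
  next
    case False
    define D where "D = d L"
    define b where "b = a - offset d (Suc L)"
    have b: "b < d (Suc L) * D" and a: "a = offset d (Suc L) + b"
      using Suc.prems False offset_Suc[of "Suc L" d] unfolding b_def D_def by auto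
    then have "0 < D" by (cases "D = 0") auto
    then have "b div D < d (Suc L)" "b mod D < D" "b = b div D * D + b mod D"
      using b by (auto simp: less_mult_imp_div_less)
    then show ?thesis
      using a unfolding param_index_def D_def
      by (intro exI[of _ "Suc L"] exI[of _ "b div D"] exI[of _ "b mod D"]) (simp add: D_def add.assoc)
  qed
qed

lemma sum_lessThan_add:
  fixes x y :: nat
  shows "(\<Sum>k<x + y. F k) = (\<Sum>k<x. F k) + (\<Sum>k<y. (F (x + k) :: 'a::comm_monoid_add))"
  by (induction y) (auto simp: add.assoc)

lemma sum_lessThan_mult:
  fixes p q :: nat
  shows "(\<Sum>k<p * q. F k) = (\<Sum>r<p. \<Sum>c<q. (F (r * q + c) :: 'a::comm_monoid_add))"
  using sum.nat_group[of F q p, symmetric]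
  by (simp add: sum.atLeastLessThan_shift_0 atLeast0LessThan)

lemma sum_params:
  "(\<Sum>a<offset d (Suc L). F a) = (\<Sum>i\<in>{1..L}. \<Sum>r<d i. \<Sum>c<d (i - 1). F (param_index d i r c))"
proof (induction L)
  case 0
  then show ?case by (simp add: offset_def)
next
  case (Suc L)
  then show ?case
    using sum_lessThan_add[of F "offset d (Suc L)"]
      sum_lessThan_mult[of "\<lambda>k. F (offset d (Suc L) + k)"]
    by (simp add: offset_Suc[of "Suc L"] param_index_def add.assoc)
qed

section \<open>The network output\<close>

definition net_output :: "(nat \<Rightarrow> nat) \<Rightarrow> nat \<Rightarrow> real vec \<Rightarrow> real" where
  "net_output d L w = mprod (layer d w) d 1 L $$ (0, 0)"

definition net_partial :: "(nat \<Rightarrow> nat) \<Rightarrow> nat \<Rightarrow> real vec \<Rightarrow> nat \<Rightarrow> real" where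
  "net_partial d L w a = net_output d L (w + unit_vec (offset d (Suc L)) a) - net_output d L w"

lemma layer_add_unit_vec:
  assumes w: "w \<in> carrier_vec (offset d (Suc L))"
    and i: "1 \<le> i" "i \<le> L" "r < d i" "c < d (i - 1)"
    and j: "1 \<le> j" "j \<le> L" "r' < d j" "c' < d (j - 1)"
  shows "layer d (w + s \<cdot>\<^sub>v unit_vec (offset d (Suc L)) (param_index d i r c)) j $$ (r', c')
    = layer d w j $$ (r', c') + (if (j, r', c') = (i, r, c) then s else 0)"
  using w param_index_lt_offset[OF i] param_index_lt_offset[OF j]
    param_index_inj[of j r' d c' i r c] i j
  by (auto simp: layer_entry)

lemma net_output_add_unit_vec:
  assumes w: "w \<in> carrier_vec (offset d (Suc L))"
    and d0: "d 0 = 1" and dL: "d L = 1"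
    and i: "1 \<le> i" "i \<le> L" "r < d i" "c < d (i - 1)"
  shows "net_output d L (w + s \<cdot>\<^sub>v unit_vec (offset d (Suc L)) (param_index d i r c))
    = net_output d L w + s * (mprod (layer d w) d (Suc i) L $$ (0, r) * mprod (layer d w) d 1 (i - 1) $$ (c, 0))"
proof -
  define v where "v = w + s \<cdot>\<^sub>v unit_vec (offset d (Suc L)) (param_index d i r c)"
  define P where "P = mprod (layer d w) d (Suc i) L"
  define Q where "Q = mprod (layer d w) d 1 (i - 1)"
  have same_layer: "layer d v j = layer d w j" if "1 \<le> j" "j \<le> L" "j \<noteq> i" for j
    by (rule eq_matI) (use that layer_add_unit_vec[OF w i, of j] in \<open>auto simp: v_def layer_def\<close>)
  have "mprod (layer d v) d (Suc i) L = P" "mprod (layer d v) d 1 (i - 1) = Q"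
    unfolding P_def Q_def using i by (auto intro!: mprod_cong same_layer)
  then have "net_output d L v = (\<Sum>r'<d i. \<Sum>c'<d (i - 1).
      P $$ (0, r') * layer d w i $$ (r', c') * Q $$ (c', 0) +
      (if c' = c then if r' = r then s * (P $$ (0, r') * Q $$ (c', 0)) else 0 else 0))"
    unfolding net_output_def
    using mprod_entry_through_layer[of L "layer d v" d, OF layer_carrier d0 dL i(1,2)]
      layer_add_unit_vec[OF w i i(1,2)]
    by (auto simp: v_def algebra_simps intro!: sum.cong)
  also have "\<dots> = net_output d L w + s * (P $$ (0, r) * Q $$ (c, 0))"
    unfolding net_output_def P_def Q_def
    using mprod_entry_through_layer[of L "layer d w" d, OF layer_carrier d0 dL i(1,2)] i
    by (simp add: sum.distrib)
  finally show ?thesis unfolding v_def P_def Q_def .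
qed

lemma net_partial_param_index:
  assumes "w \<in> carrier_vec (offset d (Suc L))" and "d 0 = 1" and "d L = 1"
    and "1 \<le> i" "i \<le> L" "r < d i" "c < d (i - 1)"
  shows "net_partial d L w (param_index d i r c)
    = mprod (layer d w) d (Suc i) L $$ (0, r) * mprod (layer d w) d 1 (i - 1) $$ (c, 0)"
  using net_output_add_unit_vec[OF assms, of 1] unfolding net_partial_def by simp

lemma net_output_coordinate_affine:
  assumes d0: "d 0 = 1" and dL: "d L = 1"
  shows "w \<in> carrier_vec (offset d (Suc L)) \<Longrightarrow> a < offset d (Suc L) \<Longrightarrow>
    net_output d L (w + s \<cdot>\<^sub>v unit_vec (offset d (Suc L)) a) = net_output d L w + s * net_partial d L w a"
  using param_index_surj[of a d L] net_output_add_unit_vec[OF _ d0 dL] net_partial_param_index[OF _ d0 dL]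
  by auto

lemma sum_sq_net_partial:
  assumes w: "w \<in> carrier_vec (offset d (Suc L))" and d0: "d 0 = 1" and dL: "d L = 1"
    and d_pos: "\<And>j. j \<le> L \<Longrightarrow> 0 < d j"
  shows "(\<Sum>a<offset d (Suc L). (net_partial d L w a)\<^sup>2)
    = (\<Sum>i\<in>{1..L}. (sigma_max (mprod (layer d w) d (i + 1) L))\<^sup>2
                   * (sigma_max (mprod (layer d w) d 1 (i - 1)))\<^sup>2)"
  unfolding sum_params
proof (rule sum.cong[OF refl])
  fix i assume "i \<in> {1..L}"
  then have i: "1 \<le> i" "i \<le> L" by simp_all
  have "mprod (layer d w) d (Suc i) L \<in> carrier_mat 1 (d i)"
    using mprod_carrier[of L "layer d w" d, OF layer_carrier, of "Suc i" L] i dL by simp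
  moreover have "mprod (layer d w) d 1 (i - 1) \<in> carrier_mat (d (i - 1)) 1"
    using mprod_carrier[of L "layer d w" d, OF layer_carrier, of 1 "i - 1"] i d0 by simp
  ultimately show "(\<Sum>r<d i. \<Sum>c<d (i - 1). (net_partial d L w (param_index d i r c))\<^sup>2)
    = (sigma_max (mprod (layer d w) d (i + 1) L))\<^sup>2 * (sigma_max (mprod (layer d w) d 1 (i - 1)))\<^sup>2"
    using sum_sq_outer_entries[OF _ d_pos[OF i(2)]] by (simp add: net_partial_param_index[OF w d0 dL i])
qed

lemma num_params_pos:
  assumes "1 \<le> L" and "0 < d L" and "0 < d (L - 1)"
  shows "0 < num_params d L"
proof -
  have "0 < d L * d (L - 1)" using assms by simp
  also have "\<dots> \<le> num_params d L"
    unfolding num_params_def using assms by (intro member_le_sum) auto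
  finally show ?thesis .
qed

theorem theorem1:
  fixes L :: nat and m :: real and d :: "nat \<Rightarrow> nat" and wstar :: "real vec"
  assumes "L \<ge> 2"
    and "d 0 = 1" and "d L = 1"
    and "\<And>i. 1 \<le> i \<Longrightarrow> i \<le> L - 1 \<Longrightarrow> d i \<ge> 1"
    and "wstar \<in> carrier_vec (num_params d L)"
    and "mprod (layer d wstar) d 1 L $$ (0, 0) = m"
  shows "lambda_max (hessian (num_params d L) (loss d L m) wstar) =
    2 * (\<Sum>i\<in>{1..L}. (sigma_max (mprod (layer d wstar) d (i + 1) L))\<^sup>2
                     * (sigma_max (mprod (layer d wstar) d 1 (i - 1)))\<^sup>2)"
proof -
  have d_pos: "0 < d j" if "j \<le> L" for j
  proof (cases "j = 0 \<or> j = L")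
    case False
    then have "1 \<le> j" "j \<le> L - 1" using that by auto
    then show ?thesis using assms(4) by fastforce
  qed (use assms(2,3) in auto)
  have w: "wstar \<in> carrier_vec (offset d (Suc L))"
    using assms(5) by (simp add: num_params_eq_offset)
  have "0 < offset d (Suc L)"
    using num_params_pos[of L d] assms(1) d_pos by (simp add: num_params_eq_offset)
  then have "lambda_max (hessian (offset d (Suc L)) (\<lambda>v. (m - net_output d L v)\<^sup>2) wstar)
      = 2 * (\<Sum>a<offset d (Suc L). (net_partial d L wstar a)\<^sup>2)"
    using lambda_max_hessian_sq_residual[OF net_output_coordinate_affine[OF assms(2,3)] w]
      assms(6) unfolding net_output_def by simp
  also have "\<dots> = 2 * (\<Sum>i\<in>{1..L}. (sigma_max (mprod (layer d wstar) d (i + 1) L))\<^sup>2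
                     * (sigma_max (mprod (layer d wstar) d 1 (i - 1)))\<^sup>2)"
    using sum_sq_net_partial[OF w assms(2,3) d_pos] by simp
  finally show ?thesis
    unfolding num_params_eq_offset loss_def net_output_def .
qed

end
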